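(* There exist an argumentation semantics $\sigma$ whose extensions are maximal conflict-free sets (w.r.t. set inclusion) and argumentation frameworks $AF=(AR,Attacks)$, $AF'=(AR',Attacks')$ with $AF\preceq_N AF'$ such that the following statement does NOT hold: if for every $E\in\sigma(AF)$ the implication $$\{(a,b)\in Attacks': a\in AR'\setminus AR,\ b\in E\}=\emptyset\ \Longrightarrow\ \forall E'\in\sigma(AF'),\ E\subseteq E'$$ holds, then for all $E\in\sigma(AF)$ and all $E'\in\sigma(AF')$ we have $E'\not\subseteq AR$ or $E'=E$.
   Context: An argumentation framework is a pair $(AR,Attacks)$ with $AR$ a finite set and $Attacks\subseteq AR\times AR$; $a$ attacks $b$ iff $(a,b)\in Attacks$. A set $S$ is conflict-free iff no element of $S$ attacks an element of $S$. An argumentation semantics $\sigma$ assigns to each argumentation framework a set $\sigma(AF)$ of subsets of $AR$; "$\sigma$'s extensions are maximal conflict-free sets" means that for every $AF$, every $E\in\sigma(AF)$ is a $\subseteq$-maximal conflict-free subset of the argument set of $AF$. $AF\preceq_N AF'$ (normal expansion) iff $AR\subseteq AR'$, $Attacks\subseteq Attacks'$ and no $(a,b)\in Attacks'\setminus Attacks$ has both $a,b\in AR$. *)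

theory Defs
  imports Main
begin

type_synonym 'a AF = "'a set \<times> ('a \<times> 'a) set"

definition is_AF :: "'a AF \<Rightarrow> bool" where
  "is_AF AF \<longleftrightarrow> finite (fst AF) \<and> snd AF \<subseteq> fst AF \<times> fst AF"

definition conflict_free :: "('a \<times> 'a) set \<Rightarrow> 'a set \<Rightarrow> bool" where
  "conflict_free Att S \<longleftrightarrow> (\<forall>a\<in>S. \<forall>b\<in>S. (a, b) \<notin> Att)"

definition maximal_conflict_free :: "'a AF \<Rightarrow> 'a set \<Rightarrow> bool" where
  "maximal_conflict_free AF S \<longleftrightarrow>
     S \<subseteq> fst AF \<and> conflict_free (snd AF) S \<and>
     (\<forall>T. S \<subset> T \<and> T \<subseteq> fst AF \<longrightarrow> \<not> conflict_free (snd AF) T)"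

definition extensions_maximal_cf :: "('a AF \<Rightarrow> 'a set set) \<Rightarrow> bool" where
  "extensions_maximal_cf \<sigma> \<longleftrightarrow>
     (\<forall>AF. is_AF AF \<longrightarrow> (\<forall>E\<in>\<sigma> AF. maximal_conflict_free AF E))"

definition normal_expansion :: "'a AF \<Rightarrow> 'a AF \<Rightarrow> bool" where
  "normal_expansion AF AF' \<longleftrightarrow>
     fst AF \<subseteq> fst AF' \<and> snd AF \<subseteq> snd AF' \<and>
     (\<forall>(a, b)\<in>snd AF' - snd AF. \<not> (a \<in> fst AF \<and> b \<in> fst AF))"

end

theory Submission
  imports Defs
begin

text \<open>The new argument 2 attacks the only extension {0} of the framework 0 \<rightarrow> 1, so the
  hypothesis of the implication holds vacuously; yet the expanded framework may choose the
  maximal conflict-free set {1}, which lies inside the old arguments and differs from {0}.\<close>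

lemma conflict_free_subset:
  "conflict_free Att T \<Longrightarrow> S \<subseteq> T \<Longrightarrow> conflict_free Att S"
  unfolding conflict_free_def by blast

lemma maximal_conflict_freeI:
  assumes "S \<subseteq> fst AF" and "conflict_free (snd AF) S"
    and "\<And>x. x \<in> fst AF - S \<Longrightarrow> \<not> conflict_free (snd AF) (insert x S)"
  shows "maximal_conflict_free AF S"
  unfolding maximal_conflict_free_def
proof (intro conjI allI impI)
  fix T assume "S \<subset> T \<and> T \<subseteq> fst AF"
  then obtain x where "x \<in> fst AF - S" "insert x S \<subseteq> T" by blast
  then show "\<not> conflict_free (snd AF) T"
    using assms(3) conflict_free_subset by blast
qed (use assms in auto)

definition two_point_semantics :: "'a AF \<Rightarrow> 'a set \<Rightarrow> 'a AF \<Rightarrow> 'a set \<Rightarrow> 'a AF \<Rightarrow> 'a set set" where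
  "two_point_semantics A E B F X = (if X = A then {E} else if X = B then {F} else {})"

lemma extensions_maximal_cf_two_point_semantics:
  assumes "maximal_conflict_free A E" and "maximal_conflict_free B F"
  shows "extensions_maximal_cf (two_point_semantics A E B F)"
  using assms unfolding extensions_maximal_cf_def two_point_semantics_def by auto

lemma maximal_conflict_free_attacker:
  "maximal_conflict_free ({0, 1 :: nat}, {(0, 1)}) {0}"
  by (rule maximal_conflict_freeI) (auto simp: conflict_free_def)

lemma maximal_conflict_free_attacked:
  "maximal_conflict_free ({0, 1, 2 :: nat}, {(0, 1), (2, 0), (2, 1)}) {1}"
  by (rule maximal_conflict_freeI) (auto simp: conflict_free_def)

theorem proposition53:
  shows "\<exists>(\<sigma> :: nat AF \<Rightarrow> nat set set) AR Att AR' Att'.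
    extensions_maximal_cf \<sigma> \<and>
    is_AF (AR, Att) \<and> is_AF (AR', Att') \<and>
    normal_expansion (AR, Att) (AR', Att') \<and>
    \<not> ((\<forall>E\<in>\<sigma> (AR, Att).
            {(a, b). (a, b) \<in> Att' \<and> a \<in> AR' - AR \<and> b \<in> E} = {} \<longrightarrow>
            (\<forall>E'\<in>\<sigma> (AR', Att'). E \<subseteq> E'))
        \<longrightarrow> (\<forall>E\<in>\<sigma> (AR, Att). \<forall>E'\<in>\<sigma> (AR', Att'). \<not> E' \<subseteq> AR \<or> E' = E))"
proof -
  define AR Att AR' Att' where "AR = {0, 1 :: nat}" and "Att = {(0 :: nat, 1 :: nat)}"
    and "AR' = {0, 1, 2 :: nat}" and "Att' = {(0 :: nat, 1 :: nat), (2, 0), (2, 1)}"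
  define \<sigma> where "\<sigma> = two_point_semantics (AR, Att) {0} (AR', Att') {1}"
  have mcf: "extensions_maximal_cf \<sigma>"
    unfolding \<sigma>_def AR_def Att_def AR'_def Att'_def
    by (intro extensions_maximal_cf_two_point_semantics
        maximal_conflict_free_attacker maximal_conflict_free_attacked)
  have AF: "is_AF (AR, Att)" "is_AF (AR', Att')"
    by (auto simp: is_AF_def AR_def Att_def AR'_def Att'_def)
  have expansion: "normal_expansion (AR, Att) (AR', Att')"
    by (auto simp: normal_expansion_def AR_def Att_def AR'_def Att'_def)
  have new_attacker: "2 \<in> AR' - AR" "(2, 0) \<in> Att'"
    by (simp_all add: AR_def AR'_def Att'_def)
  then have "AR' \<noteq> AR" by blast
  then have extensions: "\<sigma> (AR, Att) = {{0}}" "\<sigma> (AR', Att') = {{1}}"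
    by (simp_all add: \<sigma>_def two_point_semantics_def)
  have attacked: "{(a, b). (a, b) \<in> Att' \<and> a \<in> AR' - AR \<and> b \<in> {0}} \<noteq> {}"
    using new_attacker by blast
  have "{1} \<subseteq> AR" "{1 :: nat} \<noteq> {0}" by (auto simp: AR_def)
  then show ?thesis using mcf AF expansion extensions attacked
    by (intro exI[of _ \<sigma>] exI[of _ AR] exI[of _ Att] exI[of _ AR'] exI[of _ Att']) simp
qed

end
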